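(* Let $\tau$ be a good tree-like abstract path of weight $2$. Then $\tau$ has at most one good break. Furthermore: (i) if $\tau$ has exactly one good break, then there is exactly one marker of $\tau$ at which a gluing move applies; (ii) if $\tau$ has no good break, then there are exactly two markers of $\tau$ at which a gluing move applies.
   Context: $\mathbb F=\{0,1\}$, $\mathbb N=\{0,1,2,\dots\}$. Abstract vertex types: $o$ (interior), $u$ (unstable), $s$ (stable); $u,s$ are boundary. An abstract edge is $\varepsilon=(\mu,(o_1,u_1,s_1),(o_2,u_2,s_2))\in\mathbb F\times\mathbb N^3\times\mathbb N^3$ with: if $\mu=0$ then $s_1=u_2=0$; if $\mu=1$ then $o_1=o_2=0$ (interior if $\mu=0$, boundary if $\mu=1$). Weight: $w(\varepsilon)=1$ if $\mu=0$, $2-s_1-u_2$ if $\mu=1$. An abstract path $\tau=(T,\tau,\sigma)$: a non-empty finite directed tree $T=(V,E)$ (nodes; arrows, or breaks), $\tau:V\to$ abstract edges, $\sigma:E\to\{o,u,s\}$, such that for each node $v$ and type $X$, $X_1(v)\ge|\{e:t(e)=v,\sigma(e)=X\}|$, $X_2(v)\ge|\{e:s(e)=v,\sigma(e)=X\}|$, with $X_i(v)$ the entries of $\tau(v)$. Ends: $X_1(\tau)=\sum_vX_1(v)-|\sigma^{-1}(X)|$, $X_2(\tau)=\sum_vX_2(v)-|\sigma^{-1}(X)|$. Nodes are interior/boundary by $\mu(v)$. Weight $w(\tau)=\sum_vw(\tau(v))$. $\tau$ is legal if $s_1(\tau)=u_2(\tau)=0$; tree-like if $o_2(v)+u_2(v)+s_2(v)=1$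 for all $v$; good if $s_1(\tau)=s_2(\tau)=0$. A break $e$ is good if $\sigma(e)\in\{o,u\}$. Subpath = restriction to a non-empty subtree. $\mathrm{Star}^o(v)$ is the subtree induced by $v$ and its adjacent interior nodes. A marker is a node or arrow. Gluing moves (contract a subtree $T'$ to one node $v^*$, reattaching arrows to $v^*$, with $\tau(v^* )=(\mu^*,(o_1(\tau'),u_1(\tau'),s_1(\tau')),(o_2(\tau'),u_2(\tau'),s_2(\tau')))$, $\tau'$ the subpath on $T'$): (Ia) at an arrow both of whose endpoints are interior nodes, contract it, $\mu^*=0$; (Ib) at a boundary node $v$ whose subpath on $\mathrm{Star}^o(v)$ is legal, contract $\mathrm{Star}^o(v)$, $\mu^*=0$; (II) at an arrow both of whose endpoints are boundary nodes, contract it, $\mu^*=1$. *)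

theory Defs
  imports Main
begin

datatype vtype = Ot | Ut | St   (* o (interior), u (unstable), s (stable) *)

text \<open>An abstract edge (mu,(o1,u1,s1),(o2,u2,s2)); mu is an element of F = {0,1},
  encoded as a natural number with mu \<le> 1.\<close>
type_synonym aedge = "nat \<times> (nat \<times> nat \<times> nat) \<times> (nat \<times> nat \<times> nat)"

definition amu :: "aedge \<Rightarrow> nat" where
  "amu e = fst e"

fun pick :: "nat \<times> nat \<times> nat \<Rightarrow> vtype \<Rightarrow> nat" where
  "pick (a, b, c) Ot = a"
| "pick (a, b, c) Ut = b"
| "pick (a, b, c) St = c"

definition ent1 :: "aedge \<Rightarrow> vtype \<Rightarrow> nat" where
  "ent1 e X = pick (fst (snd e)) X"

definition ent2 :: "aedge \<Rightarrow> vtype \<Rightarrow> nat" where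
  "ent2 e X = pick (snd (snd e)) X"

definition is_aedge :: "aedge \<Rightarrow> bool" where
  "is_aedge e \<longleftrightarrow> amu e \<le> 1 \<and>
     (amu e = 0 \<longrightarrow> ent1 e St = 0 \<and> ent2 e Ut = 0) \<and>
     (amu e = 1 \<longrightarrow> ent1 e Ot = 0 \<and> ent2 e Ot = 0)"

definition aedge_weight :: "aedge \<Rightarrow> int" where
  "aedge_weight e = (if amu e = 0 then 1 else 2 - int (ent1 e St) - int (ent2 e Ut))"

text \<open>A path is given by a node set V, a set of arrows E \<subseteq> V \<times> V
  (arrow (a,b) has source a and target b), a labelling tau of nodes by abstract
  edges and a labelling sigma of arrows by vertex types.
  (V,E) is a directed tree: V finite nonempty, underlying undirected graph connected
  with |E| = |V| - 1 (hence acyclic, no loops, no antiparallel pairs).\<close>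

definition dtree :: "'v set \<Rightarrow> ('v \<times> 'v) set \<Rightarrow> bool" where
  "dtree V E \<longleftrightarrow> finite V \<and> V \<noteq> {} \<and> E \<subseteq> V \<times> V \<and>
     (\<forall>a\<in>V. \<forall>b\<in>V. (a, b) \<in> (E \<union> E\<inverse>)\<^sup>*) \<and> card E + 1 = card V"

definition abstract_path ::
  "'v set \<Rightarrow> ('v \<times> 'v) set \<Rightarrow> ('v \<Rightarrow> aedge) \<Rightarrow> ('v \<times> 'v \<Rightarrow> vtype) \<Rightarrow> bool" where
  "abstract_path V E tau sigma \<longleftrightarrow> dtree V E \<and> (\<forall>v\<in>V. is_aedge (tau v)) \<and>
     (\<forall>v\<in>V. \<forall>X. ent1 (tau v) X \<ge> card {e\<in>E. snd e = v \<and> sigma e = X} \<and>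
                 ent2 (tau v) X \<ge> card {e\<in>E. fst e = v \<and> sigma e = X})"

definition end1 :: "'v set \<Rightarrow> ('v \<times> 'v) set \<Rightarrow> ('v \<Rightarrow> aedge) \<Rightarrow> ('v \<times> 'v \<Rightarrow> vtype) \<Rightarrow> vtype \<Rightarrow> int" where
  "end1 V E tau sigma X = (\<Sum>v\<in>V. int (ent1 (tau v) X)) - int (card {e\<in>E. sigma e = X})"

definition end2 :: "'v set \<Rightarrow> ('v \<times> 'v) set \<Rightarrow> ('v \<Rightarrow> aedge) \<Rightarrow> ('v \<times> 'v \<Rightarrow> vtype) \<Rightarrow> vtype \<Rightarrow> int" where
  "end2 V E tau sigma X = (\<Sum>v\<in>V. int (ent2 (tau v) X)) - int (card {e\<in>E. sigma e = X})"

definition path_weight :: "'v set \<Rightarrow> ('v \<Rightarrow> aedge) \<Rightarrow> int" where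
  "path_weight V tau = (\<Sum>v\<in>V. aedge_weight (tau v))"

definition legal :: "'v set \<Rightarrow> ('v \<times> 'v) set \<Rightarrow> ('v \<Rightarrow> aedge) \<Rightarrow> ('v \<times> 'v \<Rightarrow> vtype) \<Rightarrow> bool" where
  "legal V E tau sigma \<longleftrightarrow> end1 V E tau sigma St = 0 \<and> end2 V E tau sigma Ut = 0"

definition tree_like :: "'v set \<Rightarrow> ('v \<Rightarrow> aedge) \<Rightarrow> bool" where
  "tree_like V tau \<longleftrightarrow> (\<forall>v\<in>V. ent2 (tau v) Ot + ent2 (tau v) Ut + ent2 (tau v) St = 1)"

definition good_path :: "'v set \<Rightarrow> ('v \<times> 'v) set \<Rightarrow> ('v \<Rightarrow> aedge) \<Rightarrow> ('v \<times> 'v \<Rightarrow> vtype) \<Rightarrow> bool" where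
  "good_path V E tau sigma \<longleftrightarrow> end1 V E tau sigma St = 0 \<and> end2 V E tau sigma St = 0"

definition good_breaks :: "('v \<times> 'v) set \<Rightarrow> ('v \<times> 'v \<Rightarrow> vtype) \<Rightarrow> ('v \<times> 'v) set" where
  "good_breaks E sigma = {e\<in>E. sigma e \<in> {Ot, Ut}}"

definition sub_arrows :: "('v \<times> 'v) set \<Rightarrow> 'v set \<Rightarrow> ('v \<times> 'v) set" where
  "sub_arrows E W = E \<inter> (W \<times> W)"

definition interior :: "('v \<Rightarrow> aedge) \<Rightarrow> 'v \<Rightarrow> bool" where
  "interior tau v \<longleftrightarrow> amu (tau v) = 0"

definition boundary :: "('v \<Rightarrow> aedge) \<Rightarrow> 'v \<Rightarrow> bool" where
  "boundary tau v \<longleftrightarrow> amu (tau v) = 1"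

definition star_o :: "'v set \<Rightarrow> ('v \<times> 'v) set \<Rightarrow> ('v \<Rightarrow> aedge) \<Rightarrow> 'v \<Rightarrow> 'v set" where
  "star_o V E tau v = insert v {w\<in>V. ((v, w) \<in> E \<or> (w, v) \<in> E) \<and> interior tau w}"

text \<open>Markers are nodes (Inl v) or arrows (Inr e).\<close>
definition gluing_markers ::
  "'v set \<Rightarrow> ('v \<times> 'v) set \<Rightarrow> ('v \<Rightarrow> aedge) \<Rightarrow> ('v \<times> 'v \<Rightarrow> vtype) \<Rightarrow> ('v + ('v \<times> 'v)) set" where
  "gluing_markers V E tau sigma =
     \<comment> \<open>(Ib)\<close>
     {Inl v | v. v \<in> V \<and> boundary tau v \<and>
        legal (star_o V E tau v) (sub_arrows E (star_o V E tau v)) tau sigma}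
   \<union> \<comment> \<open>(Ia)\<close>
     {Inr e | e. e \<in> E \<and> interior tau (fst e) \<and> interior tau (snd e)}
   \<union> \<comment> \<open>(II)\<close>
     {Inr e | e. e \<in> E \<and> boundary tau (fst e) \<and> boundary tau (snd e)}"

end

theory Submission
  imports Defs
begin

text \<open>
  Tree-likeness gives every node a single outgoing slot, so each node has at most one outgoing
  arrow; since \<open>|E| = |V| - 1\<close>, exactly one node, the root, has none, and every other node
  spends its slot on its arrow. Goodness then says that the free slot of the root has type
  \<open>o\<close> or \<open>u\<close> (the latter exactly when the root is a boundary node) and that \<open>s\<^sub>1(v)\<close>
  counts the \<open>s\<close>-arrows into \<open>v\<close>. Summing the weights gives
  \<open>#boundary nodes + #o-arrows = 1 + [root is boundary]\<close>, so there are at most two boundary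
  nodes. An \<open>o\<close>-arrow joins interior nodes, a \<open>u\<close>-arrow leaves and an \<open>s\<close>-arrow enters a
  boundary node, and a boundary node admits move (Ib) iff it is not the root and no \<open>s\<close>-arrow
  enters it from, nor \<open>u\<close>-arrow leaves it to, another boundary node.
\<close>

lemma sum_card_fibres:
  assumes "finite V" "finite A" "f ` A \<subseteq> V"
  shows "(\<Sum>v\<in>V. card {a\<in>A. f a = v \<and> P a}) = card {a\<in>A. P a}"
proof -
  have "{a\<in>A. P a} = (\<Union>v\<in>V. {a\<in>A. f a = v \<and> P a})" using assms(3) by auto
  also have "card \<dots> = (\<Sum>v\<in>V. card {a\<in>A. f a = v \<and> P a})"
    by (rule card_UN_disjoint) (use assms(1,2) in auto)
  finally show ?thesis by simp
qed

lemma card_split_vtype: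
  assumes "finite A"
  shows "card A = card {a\<in>A. g a = Ot} + card {a\<in>A. g a = Ut} + card {a\<in>A. g a = St}"
proof -
  have "{a\<in>A. g a = Ot} \<union> {a\<in>A. g a = Ut} \<union> {a\<in>A. g a = St} = A"
    using vtype.exhaust by blast
  moreover have "card ({a\<in>A. g a = Ot} \<union> {a\<in>A. g a = Ut} \<union> {a\<in>A. g a = St})
      = card {a\<in>A. g a = Ot} + card {a\<in>A. g a = Ut} + card {a\<in>A. g a = St}"
    using assms by (simp add: card_Un_disjoint disjoint_iff)
  ultimately show ?thesis by simp
qed

lemma card_Collect_pos:
  assumes "finite A" "a \<in> A" "P a"
  shows "0 < card {x\<in>A. P x}"
proof -
  have "{x\<in>A. P x} \<noteq> {}" using assms by blast
  moreover have "finite {x\<in>A. P x}" using assms(1) by simp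
  ultimately show ?thesis by (rule card_gt_0_iff[THEN iffD2, OF conjI])
qed

lemma card_Collect_eq_card_iff:
  assumes "finite A"
  shows "card {a\<in>A. P a} = card A \<longleftrightarrow> (\<forall>a\<in>A. P a)"
proof
  assume "card {a\<in>A. P a} = card A"
  moreover have "{a\<in>A. P a} \<subseteq> A" by blast
  ultimately have "{a\<in>A. P a} = A" using card_subset_eq[OF assms] by simp
  then show "\<forall>a\<in>A. P a" by blast
next
  assume "\<forall>a\<in>A. P a"
  then have "{a\<in>A. P a} = A" by blast
  then show "card {a\<in>A. P a} = card A" by simp
qed

locale functional_tree =
  fixes V :: "'v set" and E :: "('v \<times> 'v) set"
  assumes dtree: "dtree V E"
    and out_degree_le_1: "v \<in> V \<Longrightarrow> card {e\<in>E. fst e = v} \<le> 1"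
begin

lemma finite_V: "finite V" and arrows_in_V: "E \<subseteq> V \<times> V" and card_V: "card V = card E + 1"
  using dtree unfolding dtree_def by auto

lemma finite_E: "finite E"
  using finite_subset[OF arrows_in_V] finite_V by blast

lemma arrow_ends_in_V: "e \<in> E \<Longrightarrow> fst e \<in> V \<and> snd e \<in> V"
  using arrows_in_V by auto

lemma arrow_end_images: "fst ` E \<subseteq> V" "snd ` E \<subseteq> V"
  using arrows_in_V by auto

lemma out_arrow_unique:
  assumes "e \<in> E" "e' \<in> E" "fst e = fst e'"
  shows "e = e'"
proof -
  have "card {x\<in>E. fst x = fst e} \<le> 1"
    using out_degree_le_1 arrow_ends_in_V[OF assms(1)] by blast
  then show ?thesis
    using assms finite_E by (cases e, cases e') (auto simp: card_le_Suc0_iff_eq)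
qed

lemma card_roots: "card {v\<in>V. \<forall>e\<in>E. fst e \<noteq> v} = 1"
proof -
  define Z where "Z = {v\<in>V. \<forall>e\<in>E. fst e \<noteq> v}"
  have degree: "card {e\<in>E. fst e = v} = (if v \<in> Z then 0 else 1)" if vV: "v \<in> V" for v
  proof (cases "v \<in> Z")
    case False
    then obtain e where "e \<in> E" "fst e = v" using vV unfolding Z_def by auto
    then have "card {e\<in>E. fst e = v} \<noteq> 0"
      using card_Collect_pos[OF finite_E, of e "\<lambda>e'. fst e' = v"] by simp
    then show ?thesis using out_degree_le_1[OF vV] False by simp
  next
    case True
    then have "{e\<in>E. fst e = v} = {}" unfolding Z_def by blast
    then show ?thesis using True by (metis card.empty)
  qed
  have "card E = (\<Sum>v\<in>V. card {e\<in>E. fst e = v})"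
    using sum_card_fibres[OF finite_V finite_E arrow_end_images(1), of "\<lambda>_. True"] by simp
  also have "\<dots> = card (V - Z)"
    using degree finite_V by (simp add: sum.If_cases Diff_eq)
  also have "\<dots> = card V - card Z"
    using finite_V by (simp add: Z_def card_Diff_subset finite_subset)
  finally show ?thesis
    using card_V card_mono[OF finite_V, of Z] unfolding Z_def by auto
qed

definition root :: 'v where
  "root = (THE r. r \<in> V \<and> (\<forall>e\<in>E. fst e \<noteq> r))"

lemma root_unique: "r \<in> V \<Longrightarrow> \<forall>e\<in>E. fst e \<noteq> r \<Longrightarrow> root = r"
  and root_in_V: "root \<in> V"
  and no_arrow_from_root: "e \<in> E \<Longrightarrow> fst e \<noteq> root"
proof -
  obtain r where roots: "{v\<in>V. \<forall>e\<in>E. fst e \<noteq> v} = {r}"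
    using card_1_singleton_iff[THEN iffD1, OF card_roots[unfolded One_nat_def]] by blast
  have r: "v \<in> V \<and> (\<forall>e\<in>E. fst e \<noteq> v) \<longleftrightarrow> v = r" for v
    using arg_cong[OF roots, of "\<lambda>S. v \<in> S"] by simp
  have "root = r"
    unfolding root_def r by (rule the_eq_trivial)
  then show "r' \<in> V \<Longrightarrow> \<forall>e\<in>E. fst e \<noteq> r' \<Longrightarrow> root = r'" for r'
    using r[of r'] by simp
  show "root \<in> V" "e \<in> E \<Longrightarrow> fst e \<noteq> root" for e
    using r[of root] \<open>root = r\<close> by simp_all
qed

lemma out_arrow_exists: "v \<in> V \<Longrightarrow> v \<noteq> root \<Longrightarrow> \<exists>e\<in>E. fst e = v"
  using root_unique by blast

text \<open>If the only arrow out of \<open>v\<close> is a loop, the set of nodes reaching \<open>v\<close> is closed under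
  adjacency, so by connectivity it contains the root, which has no outgoing arrow.\<close>
lemma no_loop: "(v, v) \<notin> E"
proof
  assume loop: "(v, v) \<in> E"
  let ?C = "{y. (y, v) \<in> E\<^sup>*}"
  have "(v, root) \<in> (E \<union> E\<inverse>)\<^sup>*"
    using dtree root_in_V arrow_ends_in_V[OF loop] unfolding dtree_def by auto
  then have "root \<in> ?C"
  proof (induction rule: rtrancl_induct)
    case (step y z)
    show ?case
    proof (cases "(y, z) \<in> E")
      case yz: True
      show ?thesis
      proof (cases "y = v")
        case True
        then show ?thesis using out_arrow_unique[OF yz loop] by simp
      next
        case False
        with step.IH obtain w where "(y, w) \<in> E" "(w, v) \<in> E\<^sup>*"
          by (auto elim: converse_rtranclE)
        then show ?thesis using out_arrow_unique[OF yz] by fastforce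
      qed
    next
      case False
      then show ?thesis using step by (auto intro: converse_rtrancl_into_rtrancl)
    qed
  qed simp
  moreover have "root \<noteq> v" using no_arrow_from_root[OF loop] by simp
  ultimately obtain w where "(root, w) \<in> E"
    by (auto elim: converse_rtranclE)
  then show False using no_arrow_from_root by fastforce
qed

lemma arrow_ends_distinct: "e \<in> E \<Longrightarrow> fst e \<noteq> snd e"
  using no_loop by (cases e) auto

end

locale good_tree_like_path =
  fixes V :: "'v set" and E :: "('v \<times> 'v) set"
    and tau :: "'v \<Rightarrow> aedge" and sigma :: "'v \<times> 'v \<Rightarrow> vtype"
  assumes path: "abstract_path V E tau sigma"
    and tree_like: "tree_like V tau"
    and good: "good_path V E tau sigma"
begin

definition out_count :: "vtype \<Rightarrow> 'v \<Rightarrow> nat" where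
  "out_count X v = card {e\<in>E. fst e = v \<and> sigma e = X}"

definition in_count :: "vtype \<Rightarrow> 'v \<Rightarrow> nat" where
  "in_count X v = card {e\<in>E. snd e = v \<and> sigma e = X}"

definition arrow_count :: "vtype \<Rightarrow> nat" where
  "arrow_count X = card {e\<in>E. sigma e = X}"

lemma in_count_le_ent1: "v \<in> V \<Longrightarrow> in_count X v \<le> ent1 (tau v) X"
  and out_count_le_ent2: "v \<in> V \<Longrightarrow> out_count X v \<le> ent2 (tau v) X"
  and is_aedge_tau: "v \<in> V \<Longrightarrow> is_aedge (tau v)"
  and ent2_sum: "v \<in> V \<Longrightarrow> ent2 (tau v) Ot + ent2 (tau v) Ut + ent2 (tau v) St = 1"
  using path tree_like unfolding abstract_path_def tree_like_def in_count_def out_count_def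
  by auto

lemma out_degree_split:
  "finite E \<Longrightarrow> card {e\<in>E. fst e = v} = out_count Ot v + out_count Ut v + out_count St v"
  using card_split_vtype[of "{e\<in>E. fst e = v}" sigma] unfolding out_count_def by simp

sublocale functional_tree V E
proof
  show dtree: "dtree V E" using path unfolding abstract_path_def by blast
  fix v assume v: "v \<in> V"
  have "finite E" using dtree unfolding dtree_def by (meson finite_SigmaI finite_subset)
  then have "card {e\<in>E. fst e = v} = out_count Ot v + out_count Ut v + out_count St v"
    by (rule out_degree_split)
  also have "\<dots> \<le> ent2 (tau v) Ot + ent2 (tau v) Ut + ent2 (tau v) St"
    using out_count_le_ent2[OF v] by (intro add_mono)
  finally show "card {e\<in>E. fst e = v} \<le> 1" using ent2_sum[OF v] by simp
qed

lemma interior_iff_not_boundary: "v \<in> V \<Longrightarrow> interior tau v \<longleftrightarrow> \<not> boundary tau v"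
  using is_aedge_tau[of v] unfolding is_aedge_def interior_def boundary_def by auto

lemma interior_ends:
  "v \<in> V \<Longrightarrow> interior tau v \<Longrightarrow> ent1 (tau v) St = 0 \<and> ent2 (tau v) Ut = 0"
  using is_aedge_tau[of v] unfolding is_aedge_def interior_def by auto

lemma boundary_ends:
  "v \<in> V \<Longrightarrow> boundary tau v \<Longrightarrow> ent1 (tau v) Ot = 0 \<and> ent2 (tau v) Ot = 0"
  using is_aedge_tau[of v] unfolding is_aedge_def boundary_def by auto

lemma ent2_source_pos:
  assumes "e \<in> E"
  shows "ent2 (tau (fst e)) (sigma e) \<noteq> 0"
proof -
  have "0 < out_count (sigma e) (fst e)"
    unfolding out_count_def
    using card_Collect_pos[OF finite_E assms, of "\<lambda>e'. fst e' = fst e \<and> sigma e' = sigma e"]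
    by simp
  also have "\<dots> \<le> ent2 (tau (fst e)) (sigma e)"
    using out_count_le_ent2 arrow_ends_in_V[OF assms] by blast
  finally show ?thesis by simp
qed

lemma ent1_target_pos:
  assumes "e \<in> E"
  shows "ent1 (tau (snd e)) (sigma e) \<noteq> 0"
proof -
  have "0 < in_count (sigma e) (snd e)"
    unfolding in_count_def
    using card_Collect_pos[OF finite_E assms, of "\<lambda>e'. snd e' = snd e \<and> sigma e' = sigma e"]
    by simp
  also have "\<dots> \<le> ent1 (tau (snd e)) (sigma e)"
    using in_count_le_ent1 arrow_ends_in_V[OF assms] by blast
  finally show ?thesis by simp
qed

lemma Ot_arrow_interior:
  assumes "e \<in> E" "sigma e = Ot"
  shows "interior tau (fst e) \<and> interior tau (snd e)"
proof -
  have ends: "fst e \<in> V" "snd e \<in> V" using arrow_ends_in_V[OF assms(1)] by simp_all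
  have "ent2 (tau (fst e)) Ot \<noteq> 0" "ent1 (tau (snd e)) Ot \<noteq> 0"
    using ent2_source_pos[OF assms(1)] ent1_target_pos[OF assms(1)] assms(2) by simp_all
  then have "\<not> boundary tau (fst e)" "\<not> boundary tau (snd e)"
    using boundary_ends ends by auto
  then show ?thesis using interior_iff_not_boundary ends by simp
qed

lemma Ut_arrow_source_boundary:
  assumes "e \<in> E" "sigma e = Ut"
  shows "boundary tau (fst e)"
proof -
  have "fst e \<in> V" using arrow_ends_in_V[OF assms(1)] by simp
  moreover have "ent2 (tau (fst e)) Ut \<noteq> 0" using ent2_source_pos[OF assms(1)] assms(2) by simp
  ultimately show ?thesis using interior_ends[of "fst e"] interior_iff_not_boundary[of "fst e"] by auto
qed

lemma St_arrow_target_boundary: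
  assumes "e \<in> E" "sigma e = St"
  shows "boundary tau (snd e)"
proof -
  have "snd e \<in> V" using arrow_ends_in_V[OF assms(1)] by simp
  moreover have "ent1 (tau (snd e)) St \<noteq> 0" using ent1_target_pos[OF assms(1)] assms(2) by simp
  ultimately show ?thesis using interior_ends[of "snd e"] interior_iff_not_boundary[of "snd e"] by auto
qed

text \<open>A node other than the root uses its single outgoing slot for its unique outgoing arrow.\<close>
lemma ent2_eq_out_count:
  assumes "v \<in> V" "v \<noteq> root"
  shows "ent2 (tau v) X = out_count X v"
proof -
  obtain e where "e \<in> E" "fst e = v" using out_arrow_exists assms by blast
  then have "card {e\<in>E. fst e = v} \<noteq> 0"
    using card_Collect_pos[OF finite_E, of e "\<lambda>e'. fst e' = v"] by simp
  then have "out_count Ot v + out_count Ut v + out_count St v = 1"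
    using out_degree_split[OF finite_E, of v] out_degree_le_1[OF assms(1)] by linarith
  then show ?thesis
    using ent2_sum[OF assms(1)] out_count_le_ent2[OF assms(1), of Ot]
      out_count_le_ent2[OF assms(1), of Ut] out_count_le_ent2[OF assms(1), of St]
    by (cases X) (simp; linarith)+
qed

lemma out_count_root: "out_count X root = 0"
proof -
  have "{e\<in>E. fst e = root \<and> sigma e = X} = {}" using no_arrow_from_root by blast
  then show ?thesis unfolding out_count_def by (metis card.empty)
qed

lemma sum_ent2: "(\<Sum>v\<in>V. ent2 (tau v) X) = arrow_count X + ent2 (tau root) X"
proof -
  have "(\<Sum>v\<in>V. ent2 (tau v) X) = (\<Sum>v\<in>V. out_count X v + (if v = root then ent2 (tau root) X else 0))"
    using ent2_eq_out_count out_count_root by (intro sum.cong) auto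
  also have "\<dots> = (\<Sum>v\<in>V. out_count X v) + ent2 (tau root) X"
    using finite_V root_in_V by (simp add: sum.distrib)
  also have "(\<Sum>v\<in>V. out_count X v) = arrow_count X"
    unfolding out_count_def arrow_count_def
    by (rule sum_card_fibres[OF finite_V finite_E arrow_end_images(1)])
  finally show ?thesis .
qed

lemma sum_in_count: "(\<Sum>v\<in>V. in_count X v) = arrow_count X"
  unfolding in_count_def arrow_count_def
  by (rule sum_card_fibres[OF finite_V finite_E arrow_end_images(2)])

lemma sum_ent1_St: "(\<Sum>v\<in>V. ent1 (tau v) St) = arrow_count St"
  using good unfolding good_path_def end1_def arrow_count_def by (simp flip: of_nat_sum)

lemma root_ent2_St: "ent2 (tau root) St = 0"
  using good sum_ent2[of St] unfolding good_path_def end2_def arrow_count_def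
  by (simp flip: of_nat_sum)

lemma root_ent2_Ut: "ent2 (tau root) Ut = (if boundary tau root then 1 else 0)"
  using ent2_sum[OF root_in_V] root_ent2_St interior_ends[OF root_in_V]
    boundary_ends[OF root_in_V] interior_iff_not_boundary[OF root_in_V] by auto

lemma ent1_St_eq_in_count:
  assumes "v \<in> V"
  shows "ent1 (tau v) St = in_count St v"
proof -
  have "(\<Sum>v\<in>V. in_count St v) = (\<Sum>v\<in>V. ent1 (tau v) St)"
    using sum_in_count sum_ent1_St by simp
  from sum_mono_inv[OF this in_count_le_ent1 assms finite_V] show ?thesis by simp
qed

lemma card_V_arrow_counts: "card V = arrow_count Ot + arrow_count Ut + arrow_count St + 1"
  using card_V card_split_vtype[OF finite_E, of sigma] unfolding arrow_count_def by simp

definition boundary_nodes :: "'v set" where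
  "boundary_nodes = {v\<in>V. boundary tau v}"

definition boundary_arrows :: "('v \<times> 'v) set" where
  "boundary_arrows = {e\<in>E. boundary tau (fst e) \<and> boundary tau (snd e)}"

definition legal_nodes :: "'v set" where
  "legal_nodes = {v\<in>V. boundary tau v \<and>
     legal (star_o V E tau v) (sub_arrows E (star_o V E tau v)) tau sigma}"

lemma path_weight_eq:
  "path_weight V tau + (if boundary tau root then 1 else 0)
     = int (card boundary_nodes + arrow_count Ot) + 1"
proof -
  have node_weight: "aedge_weight (tau v) = 1 + (if boundary tau v then 1 else 0)
      - int (ent1 (tau v) St) - int (ent2 (tau v) Ut)" if "v \<in> V" for v
    using interior_ends[OF that] interior_iff_not_boundary[OF that]
    unfolding aedge_weight_def interior_def boundary_def by auto
  have "path_weight V tau = int (card V) + (\<Sum>v\<in>V. if boundary tau v then 1 else 0)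
      - int (\<Sum>v\<in>V. ent1 (tau v) St) - int (\<Sum>v\<in>V. ent2 (tau v) Ut)"
    unfolding path_weight_def using node_weight by (simp add: sum.distrib sum_subtractf)
  also have "(\<Sum>v\<in>V. if boundary tau v then 1 else 0) = int (card boundary_nodes)"
    unfolding boundary_nodes_def using finite_V by (simp add: sum.If_cases Int_def)
  finally show ?thesis
    using sum_ent1_St sum_ent2[of Ut] root_ent2_Ut card_V_arrow_counts by simp
qed

lemma card_good_breaks: "card (good_breaks E sigma) = arrow_count Ot + arrow_count Ut"
proof -
  have "good_breaks E sigma = {e\<in>E. sigma e = Ot} \<union> {e\<in>E. sigma e = Ut}"
    unfolding good_breaks_def by auto
  then show ?thesis
    unfolding arrow_count_def using finite_E by (simp add: card_Un_disjoint disjoint_iff)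
qed

lemma card_gluing_markers:
  "card (gluing_markers V E tau sigma) = arrow_count Ot + card boundary_arrows + card legal_nodes"
proof -
  let ?O = "{e\<in>E. sigma e = Ot}"
  have interior_arrows: "{e\<in>E. interior tau (fst e) \<and> interior tau (snd e)} = ?O"
  proof -
    have "sigma e = Ot" if "e \<in> E" "interior tau (fst e)" "interior tau (snd e)" for e
      using that Ut_arrow_source_boundary St_arrow_target_boundary interior_iff_not_boundary
        arrow_ends_in_V by (cases "sigma e") blast+
    then show ?thesis using Ot_arrow_interior by blast
  qed
  have markers: "gluing_markers V E tau sigma = Inl ` legal_nodes \<union> Inr ` (?O \<union> boundary_arrows)"
    unfolding gluing_markers_def legal_nodes_def boundary_arrows_def interior_arrows[symmetric]
    by blast
  have disjoint: "?O \<inter> boundary_arrows = {}"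
    unfolding boundary_arrows_def
    using Ot_arrow_interior interior_iff_not_boundary arrow_ends_in_V by blast
  have finite: "finite legal_nodes" "finite ?O" "finite boundary_arrows"
    unfolding legal_nodes_def boundary_arrows_def using finite_V finite_E by simp_all
  have "card (gluing_markers V E tau sigma)
      = card (Inl ` legal_nodes :: ('v + 'v \<times> 'v) set)
        + card (Inr ` (?O \<union> boundary_arrows) :: ('v + 'v \<times> 'v) set)"
    unfolding markers using finite by (intro card_Un_disjoint) auto
  also have "\<dots> = card legal_nodes + card (?O \<union> boundary_arrows)"
    by (simp add: card_image)
  also have "\<dots> = card legal_nodes + card ?O + card boundary_arrows"
    using card_Un_disjoint[OF finite(2,3) disjoint] by simp
  finally show ?thesis unfolding arrow_count_def by simp
qed

lemma star_St_arrows: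
  "{e\<in>sub_arrows E (star_o V E tau b). sigma e = St}
    = {e\<in>E. snd e = b \<and> sigma e = St \<and> interior tau (fst e)}"
proof (rule set_eqI, rule iffI)
  fix e assume "e \<in> {e\<in>sub_arrows E (star_o V E tau b). sigma e = St}"
  then have e: "e \<in> E" "sigma e = St" "fst e \<in> star_o V E tau b" "snd e \<in> star_o V E tau b"
    unfolding sub_arrows_def by (auto simp: mem_Times_iff)
  have "snd e = b"
    using e(4) St_arrow_target_boundary[OF e(1,2)] interior_iff_not_boundary[of "snd e"]
    unfolding star_o_def by blast
  moreover have "fst e \<noteq> b" using arrow_ends_distinct[OF e(1)] calculation by simp
  ultimately show "e \<in> {e\<in>E. snd e = b \<and> sigma e = St \<and> interior tau (fst e)}"
    using e unfolding star_o_def by auto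
next
  fix e assume e: "e \<in> {e\<in>E. snd e = b \<and> sigma e = St \<and> interior tau (fst e)}"
  then have "(fst e, b) \<in> E" "fst e \<in> V" "interior tau (fst e)"
    using arrow_ends_in_V by auto
  then have "fst e \<in> star_o V E tau b" unfolding star_o_def by blast
  moreover have "snd e \<in> star_o V E tau b" using e unfolding star_o_def by simp
  ultimately show "e \<in> {e\<in>sub_arrows E (star_o V E tau b). sigma e = St}"
    using e unfolding sub_arrows_def by (auto simp: mem_Times_iff)
qed

lemma star_Ut_arrows:
  "{e\<in>sub_arrows E (star_o V E tau b). sigma e = Ut}
    = {e\<in>E. fst e = b \<and> sigma e = Ut \<and> interior tau (snd e)}"
proof (rule set_eqI, rule iffI)
  fix e assume "e \<in> {e\<in>sub_arrows E (star_o V E tau b). sigma e = Ut}"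
  then have e: "e \<in> E" "sigma e = Ut" "fst e \<in> star_o V E tau b" "snd e \<in> star_o V E tau b"
    unfolding sub_arrows_def by (auto simp: mem_Times_iff)
  have "fst e = b"
    using e(3) Ut_arrow_source_boundary[OF e(1,2)] interior_iff_not_boundary[of "fst e"]
    unfolding star_o_def by blast
  moreover have "snd e \<noteq> b" using arrow_ends_distinct[OF e(1)] calculation by simp
  ultimately show "e \<in> {e\<in>E. fst e = b \<and> sigma e = Ut \<and> interior tau (snd e)}"
    using e unfolding star_o_def by auto
next
  fix e assume e: "e \<in> {e\<in>E. fst e = b \<and> sigma e = Ut \<and> interior tau (snd e)}"
  then have "(b, snd e) \<in> E" "snd e \<in> V" "interior tau (snd e)"
    using arrow_ends_in_V by auto
  then have "snd e \<in> star_o V E tau b" unfolding star_o_def by blast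
  moreover have "fst e \<in> star_o V E tau b" using e unfolding star_o_def by simp
  ultimately show "e \<in> {e\<in>sub_arrows E (star_o V E tau b). sigma e = Ut}"
    using e unfolding sub_arrows_def by (auto simp: mem_Times_iff)
qed

lemma legal_star_iff:
  assumes "boundary tau b"
  shows "legal (star_o V E tau b) (sub_arrows E (star_o V E tau b)) tau sigma \<longleftrightarrow>
    ent1 (tau b) St = card {e\<in>E. snd e = b \<and> sigma e = St \<and> interior tau (fst e)} \<and>
    ent2 (tau b) Ut = card {e\<in>E. fst e = b \<and> sigma e = Ut \<and> interior tau (snd e)}"
proof -
  define R where "R = {w\<in>V. ((b, w) \<in> E \<or> (w, b) \<in> E) \<and> interior tau w}"
  have star: "star_o V E tau b = insert b R" unfolding star_o_def R_def by simp
  have "finite R" "b \<notin> R"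
    unfolding R_def using finite_V assms interior_iff_not_boundary by auto
  moreover have "ent1 (tau v) St = 0 \<and> ent2 (tau v) Ut = 0" if "v \<in> R" for v
    using that interior_ends unfolding R_def by blast
  ultimately have "(\<Sum>v\<in>star_o V E tau b. int (ent1 (tau v) St)) = int (ent1 (tau b) St)"
    "(\<Sum>v\<in>star_o V E tau b. int (ent2 (tau v) Ut)) = int (ent2 (tau b) Ut)"
    unfolding star by simp_all
  then show ?thesis
    unfolding legal_def end1_def end2_def star_St_arrows star_Ut_arrows
    by simp
qed

lemma legal_nodes_iff:
  assumes "b \<in> V" "boundary tau b"
  shows "b \<in> legal_nodes \<longleftrightarrow> b \<noteq> root
    \<and> (\<forall>e\<in>E. snd e = b \<longrightarrow> sigma e = St \<longrightarrow> interior tau (fst e))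
    \<and> (\<forall>e\<in>E. fst e = b \<longrightarrow> sigma e = Ut \<longrightarrow> interior tau (snd e))"
proof -
  have finite: "finite {e\<in>E. P e}" for P using finite_E by simp
  have St_part: "ent1 (tau b) St = card {e\<in>E. snd e = b \<and> sigma e = St \<and> interior tau (fst e)}
      \<longleftrightarrow> (\<forall>e\<in>E. snd e = b \<longrightarrow> sigma e = St \<longrightarrow> interior tau (fst e))"
    using card_Collect_eq_card_iff[OF finite,
        of "\<lambda>e. snd e = b \<and> sigma e = St" "\<lambda>e. interior tau (fst e)"]
    unfolding ent1_St_eq_in_count[OF assms(1)] in_count_def by (auto simp: conj_assoc)
  show ?thesis
  proof (cases "b = root")
    case True
    then have "{e\<in>E. fst e = b \<and> sigma e = Ut \<and> interior tau (snd e)} = {}"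
      using no_arrow_from_root by blast
    then have "ent2 (tau b) Ut \<noteq> card {e\<in>E. fst e = b \<and> sigma e = Ut \<and> interior tau (snd e)}"
      using root_ent2_Ut True assms(2) by (metis card.empty zero_neq_one)
    then show ?thesis
      unfolding legal_nodes_def using legal_star_iff[OF assms(2)] True by simp
  next
    case False
    have "ent2 (tau b) Ut = card {e\<in>E. fst e = b \<and> sigma e = Ut \<and> interior tau (snd e)}
        \<longleftrightarrow> (\<forall>e\<in>E. fst e = b \<longrightarrow> sigma e = Ut \<longrightarrow> interior tau (snd e))"
      using card_Collect_eq_card_iff[OF finite,
          of "\<lambda>e. fst e = b \<and> sigma e = Ut" "\<lambda>e. interior tau (snd e)"]
      unfolding ent2_eq_out_count[OF assms(1) False] out_count_def by (auto simp: conj_assoc)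
    then show ?thesis
      unfolding legal_nodes_def using assms legal_star_iff[OF assms(2)] St_part False by simp
  qed
qed

lemma root_not_legal: "root \<notin> legal_nodes"
proof
  assume "root \<in> legal_nodes"
  then have "boundary tau root" unfolding legal_nodes_def by blast
  with \<open>root \<in> legal_nodes\<close> show False using legal_nodes_iff root_in_V by blast
qed

lemma arrow_count_eq_0_iff: "arrow_count X = 0 \<longleftrightarrow> (\<forall>e\<in>E. sigma e \<noteq> X)"
  unfolding arrow_count_def using finite_E by auto

lemma finite_boundary_nodes: "finite boundary_nodes"
  unfolding boundary_nodes_def using finite_V by simp

lemma interior_if_not_boundary_node: "v \<in> V \<Longrightarrow> v \<notin> boundary_nodes \<Longrightarrow> interior tau v"
  unfolding boundary_nodes_def using interior_iff_not_boundary by blast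

lemma boundary_arrow_ends:
  "e \<in> boundary_arrows \<Longrightarrow> e \<in> E \<and> fst e \<in> boundary_nodes \<and> snd e \<in> boundary_nodes"
  unfolding boundary_arrows_def boundary_nodes_def using arrow_ends_in_V by blast

lemma legal_nodes_subset: "legal_nodes \<subseteq> boundary_nodes"
  unfolding legal_nodes_def boundary_nodes_def by blast

lemma boundary_arrows_empty:
  assumes "card boundary_nodes \<le> 1"
  shows "boundary_arrows = {}"
proof (rule equals0I)
  fix e assume "e \<in> boundary_arrows"
  then have ends: "fst e \<in> boundary_nodes" "snd e \<in> boundary_nodes" "fst e \<noteq> snd e"
    using boundary_arrow_ends arrow_ends_distinct by blast+
  then have "card {fst e, snd e} \<le> card boundary_nodes"
    by (intro card_mono finite_boundary_nodes) auto
  then show False using assms ends(3) by simp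
qed

lemma counts_interior_root:
  assumes "path_weight V tau = 2" "interior tau root"
  shows "arrow_count Ot + arrow_count Ut = 1
    \<and> arrow_count Ot + card boundary_arrows + card legal_nodes = 1"
proof -
  have counts: "card boundary_nodes + arrow_count Ot = 1"
    using path_weight_eq assms interior_iff_not_boundary root_in_V by simp
  then have no_boundary_arrows: "boundary_arrows = {}" by (intro boundary_arrows_empty) simp
  consider "boundary_nodes = {}" "arrow_count Ot = 1"
    | b where "boundary_nodes = {b}" "arrow_count Ot = 0"
  proof -
    from counts consider "card boundary_nodes = 0" "arrow_count Ot = 1"
      | "card boundary_nodes = 1" "arrow_count Ot = 0"
      by linarith
    then show ?thesis
    proof cases
      case 1
      then show ?thesis using that(1) finite_boundary_nodes by simp
    next
      case 2
      then show ?thesis using that(2) card_1_singleton_iff[of boundary_nodes] by auto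
    qed
  qed
  then show ?thesis
  proof cases
    case 1
    then have "arrow_count Ut = 0"
      using Ut_arrow_source_boundary arrow_ends_in_V
      unfolding arrow_count_eq_0_iff boundary_nodes_def by blast
    moreover have "legal_nodes = {}" using 1 legal_nodes_subset by blast
    ultimately show ?thesis using 1 no_boundary_arrows by simp
  next
    case (2 b)
    then have b: "b \<in> V" "boundary tau b" "b \<noteq> root"
      using assms(2) interior_iff_not_boundary unfolding boundary_nodes_def by auto
    have interior_other: "interior tau v" if "v \<in> V" "v \<noteq> b" for v
      using that 2 interior_if_not_boundary_node by blast
    have interior_source: "interior tau (fst e')" if "e' \<in> E" "snd e' = b" for e'
      using that interior_other arrow_ends_in_V[OF that(1)] arrow_ends_distinct[OF that(1)] by auto
    have interior_target: "interior tau (snd e')" if "e' \<in> E" "fst e' = b" for e'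
      using that interior_other arrow_ends_in_V[OF that(1)] arrow_ends_distinct[OF that(1)] by auto
    obtain e where e: "e \<in> E" "fst e = b" using out_arrow_exists b by blast
    have "sigma e \<noteq> Ot" using 2 e arrow_count_eq_0_iff by blast
    moreover have "sigma e \<noteq> St"
      using St_arrow_target_boundary[OF e(1)] interior_target[OF e]
        interior_iff_not_boundary arrow_ends_in_V[OF e(1)] e(2) by auto
    ultimately have "sigma e = Ut" by (cases "sigma e") auto
    moreover have "e' = e" if "e' \<in> E" "sigma e' = Ut" for e'
    proof -
      have "fst e' = b"
        using Ut_arrow_source_boundary[OF that] interior_other[of "fst e'"]
          interior_iff_not_boundary[of "fst e'"] arrow_ends_in_V[OF that(1)] by auto
      then show "e' = e" using out_arrow_unique[OF that(1) e(1)] e(2) by simp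
    qed
    ultimately have "{e'\<in>E. sigma e' = Ut} = {e}" using e by blast
    then have "arrow_count Ut = 1" unfolding arrow_count_def by simp
    moreover have "b \<in> legal_nodes"
      unfolding legal_nodes_iff[OF b(1,2)] using b(3) interior_source interior_target by blast
    then have "legal_nodes = {b}" using legal_nodes_subset 2 by blast
    ultimately show ?thesis using 2 no_boundary_arrows by simp
  qed
qed

lemma counts_two_boundary_nodes:
  assumes "boundary_nodes = {root, q}" "q \<noteq> root" "arrow_count Ot = 0"
  shows "arrow_count Ut \<le> 1 \<and> arrow_count Ut + card boundary_arrows + card legal_nodes = 2"
proof -
  have q: "q \<in> V" "boundary tau q" using assms(1) unfolding boundary_nodes_def by auto
  have interior_other: "interior tau v" if "v \<in> V" "v \<noteq> root" "v \<noteq> q" for v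
    using that assms(1) interior_if_not_boundary_node by blast
  have from_q: "fst e' = q" if "e' \<in> E" "boundary tau (fst e')" for e'
    using that interior_other[of "fst e'"] interior_iff_not_boundary[of "fst e'"]
      arrow_ends_in_V[OF that(1)] no_arrow_from_root[OF that(1)] by auto
  obtain e where e: "e \<in> E" "fst e = q" using out_arrow_exists q assms(2) by blast
  have out_q: "e' = e" if "e' \<in> E" "fst e' = q" for e'
    using out_arrow_unique[OF that(1) e(1)] that(2) e(2) by simp
  have "e' \<in> E \<and> sigma e' = Ut \<longleftrightarrow> e' = e \<and> sigma e = Ut" for e'
    using from_q[of e'] Ut_arrow_source_boundary[of e'] out_q[of e'] e(1) by blast
  then have "{e'\<in>E. sigma e' = Ut} = (if sigma e = Ut then {e} else {})" by auto
  then have Ut_count: "arrow_count Ut = (if sigma e = Ut then 1 else 0)"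
    unfolding arrow_count_def by simp
  have "e' \<in> boundary_arrows \<longleftrightarrow> e' = e \<and> boundary tau (snd e)" for e'
    unfolding boundary_arrows_def using from_q[of e'] out_q[of e'] e q(2) by blast
  then have "boundary_arrows = (if boundary tau (snd e) then {e} else {})" by auto
  then have BB_count: "card boundary_arrows = (if boundary tau (snd e) then 1 else 0)" by simp
  have "interior tau (fst e')" if "e' \<in> E" "snd e' = q" for e'
    using that interior_other[of "fst e'"] arrow_ends_in_V[OF that(1)]
      arrow_ends_distinct[OF that(1)] no_arrow_from_root[OF that(1)] by auto
  then have "q \<in> legal_nodes \<longleftrightarrow> (sigma e = Ut \<longrightarrow> interior tau (snd e))"
    unfolding legal_nodes_iff[OF q] using assms(2) out_q e by blast
  moreover note root_not_legal
  ultimately have "legal_nodes = (if sigma e = Ut \<and> boundary tau (snd e) then {} else {q})"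
    using legal_nodes_subset assms(1) interior_iff_not_boundary[of "snd e"]
      arrow_ends_in_V[OF e(1)] by auto
  then have LB_count: "card legal_nodes = (if sigma e = Ut \<and> boundary tau (snd e) then 0 else 1)"
    by simp
  have "sigma e \<noteq> Ot" using assms(3) e arrow_count_eq_0_iff by blast
  then show ?thesis
    using Ut_count BB_count LB_count St_arrow_target_boundary[OF e(1)] by (cases "sigma e") auto
qed

lemma counts_boundary_root:
  assumes "path_weight V tau = 2" "boundary tau root"
  shows "arrow_count Ot + arrow_count Ut \<le> 1
    \<and> arrow_count Ot + arrow_count Ut + arrow_count Ot + card boundary_arrows + card legal_nodes = 2"
proof -
  have counts: "card boundary_nodes + arrow_count Ot = 2"
    using path_weight_eq assms by simp
  have root: "root \<in> boundary_nodes" using assms(2) root_in_V unfolding boundary_nodes_def by blast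
  consider "boundary_nodes = {root}" "arrow_count Ot = 1"
    | q where "boundary_nodes = {root, q}" "q \<noteq> root" "arrow_count Ot = 0"
  proof -
    have "card boundary_nodes \<noteq> 0" using root finite_boundary_nodes by auto
    with counts consider "card boundary_nodes = 1" "arrow_count Ot = 1"
      | "card boundary_nodes = 2" "arrow_count Ot = 0"
      by linarith
    then show ?thesis
    proof cases
      case 1
      then show ?thesis using that(1) root card_1_singleton_iff[of boundary_nodes] by auto
    next
      case 2
      then obtain x y where "boundary_nodes = {x, y}" "x \<noteq> y" by (auto simp: card_2_iff)
      then show ?thesis using that(2)[of y] that(2)[of x] root 2 by (auto simp: insert_commute)
    qed
  qed
  then show ?thesis
  proof cases
    case 1
    have "arrow_count Ut = 0"
      using 1 Ut_arrow_source_boundary arrow_ends_in_V no_arrow_from_root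
      unfolding arrow_count_eq_0_iff boundary_nodes_def by blast
    moreover have "boundary_arrows = {}" using 1 by (intro boundary_arrows_empty) simp
    moreover have "legal_nodes = {}" using 1 legal_nodes_subset root_not_legal by auto
    ultimately show ?thesis using 1 by simp
  next
    case (2 q)
    then show ?thesis using counts_two_boundary_nodes by simp
  qed
qed

lemma counts_of_weight_2:
  assumes "path_weight V tau = 2"
  shows "card (good_breaks E sigma) \<le> 1
    \<and> card (good_breaks E sigma) + card (gluing_markers V E tau sigma) = 2"
proof (cases "boundary tau root")
  case True
  then show ?thesis
    using counts_boundary_root[OF assms] unfolding card_good_breaks card_gluing_markers by simp
next
  case False
  then show ?thesis
    using counts_interior_root[OF assms] interior_iff_not_boundary[OF root_in_V]
    unfolding card_good_breaks card_gluing_markers by simp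
qed

end

theorem corollary3p17:
  fixes V :: "'v set" and E :: "('v \<times> 'v) set"
    and tau :: "'v \<Rightarrow> aedge" and sigma :: "'v \<times> 'v \<Rightarrow> vtype"
  assumes "abstract_path V E tau sigma"
    and "tree_like V tau"
    and "good_path V E tau sigma"
    and "path_weight V tau = 2"
  shows "card (good_breaks E sigma) \<le> 1
    \<and> (card (good_breaks E sigma) = 1 \<longrightarrow> card (gluing_markers V E tau sigma) = 1)
    \<and> (card (good_breaks E sigma) = 0 \<longrightarrow> card (gluing_markers V E tau sigma) = 2)"
proof -
  interpret good_tree_like_path V E tau sigma
    using assms(1-3) by unfold_locales
  show ?thesis using counts_of_weight_2[OF assms(4)] by auto
qed

end
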